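(* Let $m\geq 1$, $n\geq 3$ and $p\geq 2$ be integers, and let $i,j\in V$. If $P$ is a walk in $D^m_n$ of length $pn-1$ from $i$ to $j$, then exactly one of the following holds: (a) $i=1$ and $j=(k-1)(n-1)+n$ for some $k\in\{1,\ldots,m\}$, and $P=P_{1j}\circ C^{r_{p-1}}\circ\cdots\circ C^{r_1}$ for some $r_1,\ldots,r_{p-1}\in\{1,\ldots,m\}$, where $P_{1j}$ is the unique walk of length $n-1$ from $1$ to $j$; (b) $j=1$ and $i=(k-1)(n-1)+2$ for some $k\in\{1,\ldots,m\}$, and $P=C^{r_{p-1}}\circ\cdots\circ C^{r_1}\circ P_{i1}$ for some $r_1,\ldots,r_{p-1}\in\{1,\ldots,m\}$, where $P_{i1}$ is the unique walk of length $n-1$ from $i$ to $1$; (c) there exist $k,r\in\{1,\ldots,m\}$ and $\ell\in\{3,\ldots,n\}$ with $i=(k-1)(n-1)+\ell$ and $j=(r-1)(n-1)+(\ell-1)$, and $P=Q_{1j}\circ C^{r_{p-1}}\circ\cdots\circ C^{r_1}\circ Q_{i1}$ for some $r_1,\ldots,r_{p-1}\in\{1,\ldots,m\}$, where $Q_{i1}$ is the shortest walk from $i$ to $1$, $Q_{1j}$ is the shortest walk from $1$ to $j$, and $Q_{1j}\circ Q_{i1}$ is the unique walk of length $n-1$ from $i$ to $j$.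
   Context: For integers $m\geq 1$, $n\geq 3$, the oriented Dutch windmill graph $D^m_n$ is the directed graph with vertex set $V=\{1,2,\ldots,m(n-1)+1\}$ whose directed edges $(a,b)$ are exactly: $(1,(k-1)(n-1)+2)$ for $k\in\{1,\ldots,m\}$; $((k-1)(n-1)+i,(k-1)(n-1)+i+1)$ for $k\in\{1,\ldots,m\}$ and $i\in\{2,\ldots,n-1\}$; and $((k-1)(n-1)+n,1)$ for $k\in\{1,\ldots,m\}$. A walk is a sequence of vertices $\langle v_1,\ldots,v_r\rangle$ in which each $(v_t,v_{t+1})$ is an edge; its length is $r-1$. For $k\in\{1,\ldots,m\}$, $C^k$ is the closed walk $\langle 1,(k-1)(n-1)+2,\ldots,(k-1)(n-1)+n,1\rangle$ of length $n$. If $P=\langle v_1,\ldots,v_r\rangle$ and $Q=\langle w_1,\ldots,w_s\rangle$ are walks with $w_1=v_r$, then $Q\circ P=\langle v_1,\ldots,v_r,w_2,\ldots,w_s\rangle$ (first traverse $P$, then $Q$). *)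

theory Defs
  imports Main
begin

text \<open>Oriented Dutch windmill graph D^m_n on vertex set {1..m(n-1)+1}.
  Walks are nonempty vertex lists; the length of a walk P is length P - 1.\<close>

definition dw_V :: "nat \<Rightarrow> nat \<Rightarrow> nat set" where
  "dw_V m n = {1..m*(n-1)+1}"

definition dw_edge :: "nat \<Rightarrow> nat \<Rightarrow> nat \<Rightarrow> nat \<Rightarrow> bool" where
  "dw_edge m n a b \<longleftrightarrow>
     (\<exists>k\<in>{1..m}. a = 1 \<and> b = (k-1)*(n-1)+2) \<or>
     (\<exists>k\<in>{1..m}. \<exists>i\<in>{2..n-1}. a = (k-1)*(n-1)+i \<and> b = (k-1)*(n-1)+i+1) \<or>
     (\<exists>k\<in>{1..m}. a = (k-1)*(n-1)+n \<and> b = 1)"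

definition is_walk :: "nat \<Rightarrow> nat \<Rightarrow> nat list \<Rightarrow> bool" where
  "is_walk m n P \<longleftrightarrow> P \<noteq> [] \<and> set P \<subseteq> dw_V m n \<and>
     (\<forall>t. t + 1 < length P \<longrightarrow> dw_edge m n (P!t) (P!(t+1)))"

definition walk_from_to :: "nat \<Rightarrow> nat \<Rightarrow> nat \<Rightarrow> nat \<Rightarrow> nat list \<Rightarrow> bool" where
  "walk_from_to m n i j P \<longleftrightarrow> is_walk m n P \<and> hd P = i \<and> last P = j"

text \<open>Q \<circ> P: first traverse P, then Q (assumes hd Q = last P).\<close>
definition wcomp :: "nat list \<Rightarrow> nat list \<Rightarrow> nat list" where
  "wcomp Q P = P @ tl Q"

definition cyc :: "nat \<Rightarrow> nat \<Rightarrow> nat list" where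
  "cyc n k = [1] @ map (\<lambda>i. (k-1)*(n-1)+i) [2..<n+1] @ [1]"

fun cycs :: "nat \<Rightarrow> (nat \<Rightarrow> nat) \<Rightarrow> nat \<Rightarrow> nat list" where
  "cycs n r 0 = [1]"
| "cycs n r (Suc q) = wcomp (cyc n (r (Suc q))) (cycs n r q)"

definition the_walk :: "nat \<Rightarrow> nat \<Rightarrow> nat \<Rightarrow> nat \<Rightarrow> nat \<Rightarrow> nat list" where
  "the_walk m n i j L = (THE w. walk_from_to m n i j w \<and> length w = L + 1)"

definition shortest_walk :: "nat \<Rightarrow> nat \<Rightarrow> nat \<Rightarrow> nat \<Rightarrow> nat list" where
  "shortest_walk m n i j = (THE w. walk_from_to m n i j w \<and>
      (\<forall>w'. walk_from_to m n i j w' \<longrightarrow> length w \<le> length w'))"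

definition case_a :: "nat \<Rightarrow> nat \<Rightarrow> nat \<Rightarrow> nat \<Rightarrow> nat \<Rightarrow> nat list \<Rightarrow> bool" where
  "case_a m n p i j P \<longleftrightarrow> i = 1 \<and> (\<exists>k\<in>{1..m}. j = (k-1)*(n-1)+n) \<and>
     (\<exists>r. (\<forall>t\<in>{1..p-1}. r t \<in> {1..m}) \<and>
          P = wcomp (the_walk m n 1 j (n-1)) (cycs n r (p-1)))"

definition case_b :: "nat \<Rightarrow> nat \<Rightarrow> nat \<Rightarrow> nat \<Rightarrow> nat \<Rightarrow> nat list \<Rightarrow> bool" where
  "case_b m n p i j P \<longleftrightarrow> j = 1 \<and> (\<exists>k\<in>{1..m}. i = (k-1)*(n-1)+2) \<and>
     (\<exists>r. (\<forall>t\<in>{1..p-1}. r t \<in> {1..m}) \<and>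
          P = wcomp (cycs n r (p-1)) (the_walk m n i 1 (n-1)))"

definition case_c :: "nat \<Rightarrow> nat \<Rightarrow> nat \<Rightarrow> nat \<Rightarrow> nat \<Rightarrow> nat list \<Rightarrow> bool" where
  "case_c m n p i j P \<longleftrightarrow>
     (\<exists>k\<in>{1..m}. \<exists>r\<in>{1..m}. \<exists>l\<in>{3..n}. i = (k-1)*(n-1)+l \<and> j = (r-1)*(n-1)+(l-1)) \<and>
     (\<exists>rs. (\<forall>t\<in>{1..p-1}. rs t \<in> {1..m}) \<and>
          P = wcomp (shortest_walk m n 1 j) (wcomp (cycs n rs (p-1)) (shortest_walk m n i 1))) \<and>
     wcomp (shortest_walk m n 1 j) (shortest_walk m n i 1) = the_walk m n i j (n-1) \<and>
     (\<exists>!w. walk_from_to m n i j w \<and> length w = n)"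

end

theory Submission
  imports Defs
begin

text \<open>Every vertex except the hub 1 has a single out-neighbour: the l-th vertex of a blade
  moves to the (l+1)-st, the last one back to the hub. So a walk is forced until it reaches the
  hub, which takes n - l + 1 steps from the l-th vertex; from the hub it chooses a blade and is
  forced again, either returning after n steps (a cycle C^k) or stopping after d < n steps at
  the (d+1)-st vertex of the blade. Cutting a walk of length pn - 1 at its visits to the hub
  gives an initial segment to the hub, p - 1 cycles and a final segment into a blade, of total
  length n - 1 for the two segments. The three cases are: no initial segment (i = 1), no final
  segment (i is the first vertex of a blade), or both segments. Each segment is the unique walk
  of its length between its ends, and it is shortest since blade positions only increase
  between visits to the hub.\<close>

text \<open>The l-th vertex (2 \<le> l \<le> n) of the k-th blade, i.e. of the cycle C^k; the hub 1 is
  shared by all blades.\<close>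

definition blade_vertex :: "nat \<Rightarrow> nat \<Rightarrow> nat \<Rightarrow> nat" where
  "blade_vertex n k l = (k - 1) * (n - 1) + l"

lemma blade_vertex_div_mod:
  assumes "n \<ge> 3" "l \<in> {2..n}"
  shows "(blade_vertex n k l - 2) div (n - 1) = k - 1"
    and "(blade_vertex n k l - 2) mod (n - 1) = l - 2"
proof -
  have "blade_vertex n k l - 2 = (k - 1) * (n - 1) + (l - 2)" and "l - 2 < n - 1"
    using assms by (auto simp: blade_vertex_def)
  then show "(blade_vertex n k l - 2) div (n - 1) = k - 1"
    and "(blade_vertex n k l - 2) mod (n - 1) = l - 2" by simp_all
qed

lemma blade_vertex_inject:
  assumes "n \<ge> 3" "k \<ge> 1" "k' \<ge> 1" "l \<in> {2..n}" "l' \<in> {2..n}"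
  shows "blade_vertex n k l = blade_vertex n k' l' \<longleftrightarrow> k = k' \<and> l = l'"
proof
  assume eq: "blade_vertex n k l = blade_vertex n k' l'"
  have "k - 1 = k' - 1" and "l - 2 = l' - 2"
    using blade_vertex_div_mod[of n l k] blade_vertex_div_mod[of n l' k'] assms
    by (simp_all add: eq)
  then show "k = k' \<and> l = l'" using assms by auto
qed simp

lemma blade_vertex_neq_hub [simp]: "2 \<le> l \<Longrightarrow> blade_vertex n k l \<noteq> 1"
  by (simp add: blade_vertex_def)

lemma dw_V_cases:
  assumes "v \<in> dw_V m n" "n \<ge> 3"
  obtains "v = 1" | k l where "k \<in> {1..m}" "l \<in> {2..n}" "v = blade_vertex n k l"
proof (cases "v = 1")
  case False
  define k where "k = (v - 2) div (n - 1) + 1"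
  define l where "l = (v - 2) mod (n - 1) + 2"
  have v: "2 \<le> v" "v \<le> m * (n - 1) + 1" using assms False by (auto simp: dw_V_def)
  have "v - 2 < m * (n - 1)" using v by linarith
  then have "(v - 2) div (n - 1) < m" by (rule less_mult_imp_div_less)
  then have "k \<in> {1..m}" by (simp add: k_def)
  moreover have "(v - 2) mod (n - 1) < n - 1" using assms(2) by simp
  then have "l \<in> {2..n}" by (simp add: l_def)
  moreover have "v = blade_vertex n k l"
    using v div_mult_mod_eq[of "v - 2" "n - 1"] by (simp add: k_def l_def blade_vertex_def)
  ultimately show thesis by (rule that(2))
qed simp

lemma dw_edge_from_hub_iff:
  "n \<ge> 3 \<Longrightarrow> dw_edge m n 1 b \<longleftrightarrow> (\<exists>k\<in>{1..m}. b = blade_vertex n k 2)"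
  by (auto simp: dw_edge_def blade_vertex_def)

lemma dw_edge_from_blade_iff:
  assumes "n \<ge> 3" "k \<in> {1..m}" "l \<in> {2..n}"
  shows "dw_edge m n (blade_vertex n k l) b \<longleftrightarrow>
    b = (if l = n then 1 else blade_vertex n k (l + 1))"
proof
  assume "dw_edge m n (blade_vertex n k l) b"
  then consider "blade_vertex n k l = 1"
    | k' l' where "k' \<in> {1..m}" "l' \<in> {2..n - 1}" "blade_vertex n k l = blade_vertex n k' l'"
        "b = blade_vertex n k' (l' + 1)"
    | k' where "k' \<in> {1..m}" "blade_vertex n k l = blade_vertex n k' n" "b = 1"
    unfolding dw_edge_def blade_vertex_def by auto
  then show "b = (if l = n then 1 else blade_vertex n k (l + 1))"
  proof cases
    case 1
    then show ?thesis using blade_vertex_neq_hub[of l n k] assms(3) by simp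
  next
    case (2 k' l')
    then have "k' = k" "l' = l" using blade_vertex_inject[of n k k' l l'] assms by auto
    with 2 show ?thesis by auto
  next
    case (3 k')
    then have "l = n" using blade_vertex_inject[of n k k' l n] assms by auto
    with 3 show ?thesis by simp
  qed
next
  assume b: "b = (if l = n then 1 else blade_vertex n k (l + 1))"
  show "dw_edge m n (blade_vertex n k l) b"
  proof (cases "l = n")
    case True
    then show ?thesis using b assms(2) unfolding dw_edge_def blade_vertex_def by auto
  next
    case False
    then have "l \<in> {2..n - 1}" "b = (k - 1) * (n - 1) + l + 1"
      using b assms(3) by (auto simp: blade_vertex_def)
    then show ?thesis using assms(2) unfolding dw_edge_def blade_vertex_def by blast
  qed
qed

lemma is_walk_iff_successively:
  "is_walk m n w \<longleftrightarrow> w \<noteq> [] \<and> set w \<subseteq> dw_V m n \<and> successively (dw_edge m n) w"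
  by (auto simp: is_walk_def successively_conv_nth)

lemma is_walk_edge:
  "is_walk m n w \<Longrightarrow> Suc t < length w \<Longrightarrow> dw_edge m n (w ! t) (w ! Suc t)"
  by (simp add: is_walk_def)

lemma walk_from_to_take:
  assumes "walk_from_to m n i j w" "d < length w"
  shows "walk_from_to m n i (w ! d) (take (Suc d) w)"
proof -
  have "last (take (Suc d) w) = w ! d" using assms(2) by (simp add: take_Suc_conv_app_nth)
  then show ?thesis
    using assms set_take_subset[of "Suc d" w] by (auto simp: walk_from_to_def is_walk_def)
qed

lemma walk_from_to_drop:
  assumes "walk_from_to m n i j w" "d < length w"
  shows "walk_from_to m n (w ! d) j (drop d w)"
  using assms set_drop_subset[of d w]
  by (auto simp: walk_from_to_def is_walk_def hd_drop_conv_nth)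

lemma walk_from_to_nth_0: "walk_from_to m n i j w \<Longrightarrow> w ! 0 = i"
  by (auto simp: walk_from_to_def is_walk_def hd_conv_nth)

lemma walk_from_to_wcomp:
  assumes "walk_from_to m n i x A" "walk_from_to m n x j B"
  shows "walk_from_to m n i j (wcomp B A)"
proof -
  obtain B' where "B = x # B'" using assms(2) by (cases B) (auto simp: walk_from_to_def is_walk_def)
  then show ?thesis
    using assms unfolding walk_from_to_def is_walk_iff_successively wcomp_def
    by (auto simp: successively_append_iff successively_Cons)
qed

lemma length_wcomp: "B \<noteq> [] \<Longrightarrow> length (wcomp B A) = length A + length B - 1"
  by (cases B) (simp_all add: wcomp_def)

lemma wcomp_assoc: "B \<noteq> [] \<Longrightarrow> wcomp C (wcomp B A) = wcomp (wcomp C B) A"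
  by (simp add: wcomp_def)

lemma wcomp_drop_take: "d < length w \<Longrightarrow> wcomp (drop d w) (take (Suc d) w) = w"
  unfolding wcomp_def tl_drop drop_Suc[symmetric] by simp

lemma the_walk_eqI:
  assumes "walk_from_to m n i j w" "length w = Suc L"
    and "\<And>w'. walk_from_to m n i j w' \<Longrightarrow> length w' = Suc L \<Longrightarrow> w' = w"
  shows "the_walk m n i j L = w"
  unfolding the_walk_def by (rule the_equality) (simp_all add: assms)

lemma shortest_walk_eqI:
  assumes "walk_from_to m n i j w"
    and "\<And>w'. walk_from_to m n i j w' \<Longrightarrow> length w \<le> length w'"
    and "\<And>w'. walk_from_to m n i j w' \<Longrightarrow> length w' = length w \<Longrightarrow> w' = w"
  shows "shortest_walk m n i j = w"
  unfolding shortest_walk_def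
proof (rule the_equality)
  fix w'
  assume "walk_from_to m n i j w' \<and>
    (\<forall>w''. walk_from_to m n i j w'' \<longrightarrow> length w' \<le> length w'')"
  then show "w' = w" using assms by (meson le_antisym)
qed (use assms in blast)

lemma is_walk_nth_blade:
  assumes "is_walk m n w" "n \<ge> 3" "k \<in> {1..m}" "w ! t = blade_vertex n k l" "2 \<le> l"
    and "l + d \<le> n" "t + d < length w"
  shows "w ! (t + d) = blade_vertex n k (l + d)"
  using assms(6,7)
proof (induction d)
  case 0
  then show ?case using assms(4) by simp
next
  case (Suc d)
  then have "w ! (t + d) = blade_vertex n k (l + d)" by simp
  moreover have "dw_edge m n (w ! (t + d)) (w ! Suc (t + d))"
    using is_walk_edge[OF assms(1)] Suc.prems by simp
  ultimately show ?case using dw_edge_from_blade_iff[of n k m "l + d"] assms(2,3,5) Suc.prems by simp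
qed

lemma is_walk_nth_blade_exit:
  assumes "is_walk m n w" "n \<ge> 3" "k \<in> {1..m}" "w ! t = blade_vertex n k l" "l \<in> {2..n}"
    and "t + (n - l + 1) < length w"
  shows "w ! (t + (n - l + 1)) = 1"
proof -
  have "w ! (t + (n - l)) = blade_vertex n k n"
    using is_walk_nth_blade[OF assms(1-4), of "n - l"] assms(5,6) by simp
  moreover have "dw_edge m n (w ! (t + (n - l))) (w ! Suc (t + (n - l)))"
    using is_walk_edge[OF assms(1)] assms(6) by simp
  ultimately show ?thesis using dw_edge_from_blade_iff[of n k m n] assms(2,3) by simp
qed

lemma is_walk_nth_from_hub:
  assumes "is_walk m n w" "n \<ge> 3" "w ! t = 1" "Suc t < length w"
  obtains k where "k \<in> {1..m}" "w ! Suc t = blade_vertex n k 2"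
  using is_walk_edge[OF assms(1,4)] assms(2,3) dw_edge_from_hub_iff by auto

lemma length_cyc: "n \<ge> 3 \<Longrightarrow> length (cyc n k) = Suc n"
  by (simp add: cyc_def)

lemma cyc_nth:
  assumes "n \<ge> 3" "e \<le> n"
  shows "cyc n k ! e = (if e = 0 \<or> e = n then 1 else blade_vertex n k (Suc e))"
  using assms by (auto simp: cyc_def blade_vertex_def nth_append nth_Cons')

lemma hub_walk_prefix_cyc:
  assumes "is_walk m n w" "n \<ge> 3" "w ! 0 = 1" "1 < length w"
  obtains k where "k \<in> {1..m}" "take (Suc n) w = take (length w) (cyc n k)"
proof -
  obtain k where k: "k \<in> {1..m}" "w ! 1 = blade_vertex n k 2"
    using is_walk_nth_from_hub[OF assms(1,2,3)] assms(4) by auto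
  have "w ! e = cyc n k ! e" if e: "e < length w" "e \<le> n" for e
  proof -
    consider "e = 0" | "0 < e" "e < n" | "e = n" using e(2) by linarith
    then show ?thesis
    proof cases
      case 2
      then show ?thesis using is_walk_nth_blade[OF assms(1,2) k(1,2), of "e - 1"] e assms(2)
        by (simp add: cyc_nth)
    next
      case 3
      then have "1 + (n - 2 + 1) = e" using assms(2) by simp
      then show ?thesis using is_walk_nth_blade_exit[OF assms(1,2) k(1,2)] e 3 assms(2)
        by (simp add: cyc_nth)
    qed (simp add: assms(3) cyc_def)
  qed
  then have "take (Suc n) w = take (length w) (cyc n k)"
    using assms(2) by (intro nth_equalityI) (auto simp: length_cyc min_def split: if_splits)
  with k(1) show thesis by (rule that)
qed

lemma last_take_cyc:
  assumes "n \<ge> 3" "1 < L" "L \<le> n"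
  shows "last (take L (cyc n k)) = blade_vertex n k L"
proof -
  have "take L (cyc n k) \<noteq> []" "length (take L (cyc n k)) = L"
    using assms by (auto simp: length_cyc cyc_def)
  then have "last (take L (cyc n k)) = cyc n k ! (L - 1)"
    using last_conv_nth[of "take L (cyc n k)"] assms(2) by simp
  moreover have "L - 1 < n" "Suc (L - 1) = L" using assms by auto
  ultimately show ?thesis using assms by (simp add: cyc_nth)
qed

lemma walk_from_to_length_gt_1:
  assumes "walk_from_to m n i j w" "i \<noteq> j"
  shows "1 < length w"
  using assms by (cases w) (auto simp: walk_from_to_def is_walk_def)

lemma hub_walk_eq_take_cyc:
  assumes "walk_from_to m n 1 j w" "n \<ge> 3" "1 < length w" "length w \<le> n"
  obtains k where "k \<in> {1..m}" "w = take (length w) (cyc n k)" "j = blade_vertex n k (length w)"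
proof -
  obtain k where k: "k \<in> {1..m}" "take (Suc n) w = take (length w) (cyc n k)"
    using hub_walk_prefix_cyc[of m n w] assms walk_from_to_nth_0 unfolding walk_from_to_def
    by blast
  then have "w = take (length w) (cyc n k)" using assms(4) by simp
  moreover have "j = last w" using assms(1) by (simp add: walk_from_to_def)
  ultimately show thesis
    using that[OF k(1)] last_take_cyc[OF assms(2,3,4)] by metis
qed

lemma hub_walk_unique:
  assumes "walk_from_to m n 1 j w" "walk_from_to m n 1 j w'" "n \<ge> 3"
    and "length w = length w'" "length w \<le> n"
  shows "w = w'"
proof (cases "length w = 1")
  case True
  then show ?thesis
    using assms(4) walk_from_to_nth_0[OF assms(1)] walk_from_to_nth_0[OF assms(2)]
    by (auto simp: length_Suc_conv)
next
  case False
  then have "1 < length w" using assms(1) by (cases w) (auto simp: walk_from_to_def is_walk_def)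
  then obtain k k' where "k \<in> {1..m}" "w = take (length w) (cyc n k)" "j = blade_vertex n k (length w)"
    and "k' \<in> {1..m}" "w' = take (length w) (cyc n k')" "j = blade_vertex n k' (length w)"
    using hub_walk_eq_take_cyc[OF assms(1,3)] hub_walk_eq_take_cyc[OF assms(2,3)] assms(4,5)
    by metis
  moreover from this have "k = k'"
    using blade_vertex_inject[of n k k' "length w" "length w"] \<open>1 < length w\<close> assms(3,5) by auto
  ultimately show ?thesis by simp
qed

lemma hub_to_blade_length_ge:
  assumes "walk_from_to m n 1 (blade_vertex n r l) w" "n \<ge> 3" "r \<in> {1..m}" "l \<in> {2..n}"
  shows "l \<le> length w"
proof (rule ccontr)
  assume "\<not> l \<le> length w"
  moreover have "1 < length w"
    using walk_from_to_length_gt_1[OF assms(1)] blade_vertex_neq_hub[of l n r] assms(4) by auto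
  moreover have "length w \<le> n" using \<open>\<not> l \<le> length w\<close> assms(4) by auto
  ultimately obtain k where "k \<in> {1..m}" "blade_vertex n r l = blade_vertex n k (length w)"
    using hub_walk_eq_take_cyc[OF assms(1,2)] by metis
  then have "l = length w"
    using blade_vertex_inject[of n r k l "length w"] \<open>1 < length w\<close> \<open>length w \<le> n\<close> assms(2-4)
    by auto
  with \<open>\<not> l \<le> length w\<close> show False by simp
qed

lemma length_cycs: "n \<ge> 3 \<Longrightarrow> length (cycs n r q) = q * n + 1"
  by (induction q) (auto simp: wcomp_def length_cyc)

lemma last_cycs: "last (cycs n r q) = 1"
  by (induction q) (auto simp: wcomp_def cyc_def)

lemma cycs_cong: "(\<And>t. t \<in> {1..q} \<Longrightarrow> r t = r' t) \<Longrightarrow> cycs n r q = cycs n r' q"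
  by (induction q) auto

lemma hub_walk_take_cycs:
  assumes "walk_from_to m n 1 j w" "n \<ge> 3" "q * n < length w"
  shows "\<exists>r. (\<forall>t\<in>{1..q}. r t \<in> {1..m}) \<and> take (q * n + 1) w = cycs n r q"
  using assms(3)
proof (induction q)
  case 0
  then show ?case using walk_from_to_nth_0[OF assms(1)] by (simp add: take_Suc_conv_app_nth)
next
  case (Suc q)
  then obtain r where r: "\<forall>t\<in>{1..q}. r t \<in> {1..m}" "take (q * n + 1) w = cycs n r q"
    by auto
  define w' where "w' = drop (q * n) w"
  have "w ! (q * n) = last (take (q * n + 1) w)"
    using Suc.prems by (simp add: take_Suc_conv_app_nth)
  then have w': "walk_from_to m n 1 j w'"
    using walk_from_to_drop[OF assms(1), of "q * n"] r(2) Suc.prems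
    by (simp add: w'_def last_cycs)
  moreover have "n < length w'"
    using Suc.prems by (simp add: w'_def)
  ultimately obtain k where k: "k \<in> {1..m}" "take (Suc n) w' = take (length w') (cyc n k)"
    using hub_walk_prefix_cyc[of m n w'] walk_from_to_nth_0[OF w'] assms(2)
    unfolding walk_from_to_def by auto
  then have "take (Suc n) w' = cyc n k"
    using \<open>n < length w'\<close> length_cyc[OF assms(2)] by simp
  have "tl (take (Suc n) w') = take n (drop (q * n + 1) w)"
    unfolding w'_def tl_take tl_drop drop_Suc[symmetric] by simp
  then have "take (Suc q * n + 1) w = take (q * n + 1) w @ tl (take (Suc n) w')"
    using take_add[of "q * n + 1" n w] by (simp add: add_ac)
  also have "\<dots> = cycs n (r(Suc q := k)) (Suc q)"
  proof -
    have "cycs n (r(Suc q := k)) q = cycs n r q" by (rule cycs_cong) simp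
    then show ?thesis using r(2) \<open>take (Suc n) w' = cyc n k\<close> by (simp add: wcomp_def)
  qed
  finally have "take (Suc q * n + 1) w = cycs n (r(Suc q := k)) (Suc q)" .
  moreover have "\<forall>t\<in>{1..Suc q}. (r(Suc q := k)) t \<in> {1..m}" using r(1) k(1) by auto
  ultimately show ?case by blast
qed

lemma hub_walk_decomp:
  assumes "walk_from_to m n 1 j w" "n \<ge> 3" "q * n < length w"
  obtains r where "\<forall>t\<in>{1..q}. r t \<in> {1..m}" "w = wcomp (drop (q * n) w) (cycs n r q)"
    and "walk_from_to m n 1 j (drop (q * n) w)"
proof -
  obtain r where r: "\<forall>t\<in>{1..q}. r t \<in> {1..m}" "take (Suc (q * n)) w = cycs n r q"
    using hub_walk_take_cycs[OF assms] by auto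
  then have "w ! (q * n) = 1"
    using walk_from_to_take[OF assms(1,3)] by (simp add: walk_from_to_def last_cycs)
  then show thesis
    using that[OF r(1)] r(2) wcomp_drop_take[OF assms(3)] walk_from_to_drop[OF assms(1,3)] by simp
qed

lemma blade_walk_unique:
  assumes "walk_from_to m n (blade_vertex n k l) j w" "walk_from_to m n (blade_vertex n k l) j w'"
    and "n \<ge> 3" "k \<in> {1..m}" "l \<in> {2..n}" "length w = length w'" "length w \<le> n - l + 2"
  shows "w = w'"
proof (rule nth_equalityI)
  fix e assume e: "e < length w"
  have walks: "is_walk m n w" "is_walk m n w'" using assms(1,2) by (simp_all add: walk_from_to_def)
  note starts = walk_from_to_nth_0[OF assms(1)] walk_from_to_nth_0[OF assms(2)]
  consider "e \<le> n - l" | "e = n - l + 1" using e assms(7) by linarith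
  then show "w ! e = w' ! e"
  proof cases
    case 1
    then have "l + e \<le> n" using assms(5) by auto
    then show ?thesis
      using is_walk_nth_blade[OF walks(1) assms(3,4) starts(1), of e]
        is_walk_nth_blade[OF walks(2) assms(3,4) starts(2), of e] e assms(5,6) by simp
  next
    case 2
    then show ?thesis
      using is_walk_nth_blade_exit[OF walks(1) assms(3,4) starts(1)]
        is_walk_nth_blade_exit[OF walks(2) assms(3,4) starts(2)] e assms(5,6) by simp
  qed
qed (rule assms(6))

lemma blade_to_hub_length_ge:
  assumes "walk_from_to m n (blade_vertex n k l) 1 w" "n \<ge> 3" "k \<in> {1..m}" "l \<in> {2..n}"
  shows "n - l + 2 \<le> length w"
proof (rule ccontr)
  assume "\<not> ?thesis"
  moreover have "w \<noteq> []" and "last w = 1"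
    using assms(1) by (simp_all add: walk_from_to_def is_walk_def)
  ultimately have "l + (length w - 1) \<le> n" using assms(4) by (cases w) auto
  then have "last w = blade_vertex n k (l + (length w - 1))"
    using is_walk_nth_blade[of m n w k 0 l "length w - 1"] walk_from_to_nth_0[OF assms(1)] assms
      \<open>w \<noteq> []\<close> by (simp add: walk_from_to_def last_conv_nth)
  moreover have "blade_vertex n k (l + (length w - 1)) \<noteq> 1"
    using assms(4) by (intro blade_vertex_neq_hub) simp
  ultimately show False using \<open>last w = 1\<close> by simp
qed

lemma blade_walk_split_at_hub:
  assumes "walk_from_to m n (blade_vertex n k l) j w" "n \<ge> 3" "k \<in> {1..m}" "l \<in> {2..n}"
    and "n - l + 1 < length w"
  shows "walk_from_to m n (blade_vertex n k l) 1 (take (n - l + 2) w)"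
    and "walk_from_to m n 1 j (drop (n - l + 1) w)"
    and "w = wcomp (drop (n - l + 1) w) (take (n - l + 2) w)"
proof -
  have "w ! (n - l + 1) = 1"
    using is_walk_nth_blade_exit[of m n w k 0 l] walk_from_to_nth_0[OF assms(1)] assms
    by (simp add: walk_from_to_def)
  moreover have "n - l + 2 = Suc (n - l + 1)" by simp
  ultimately show "walk_from_to m n (blade_vertex n k l) 1 (take (n - l + 2) w)"
    and "walk_from_to m n 1 j (drop (n - l + 1) w)"
    and "w = wcomp (drop (n - l + 1) w) (take (n - l + 2) w)"
    using walk_from_to_take[OF assms(1,5)] walk_from_to_drop[OF assms(1,5)]
      wcomp_drop_take[OF assms(5)] by simp_all
qed

lemma blade_hub_walk_unique:
  assumes "walk_from_to m n (blade_vertex n k l) j w" "walk_from_to m n (blade_vertex n k l) j w'"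
    and "n \<ge> 3" "k \<in> {1..m}" "l \<in> {2..n}" "length w = length w'"
    and "n - l + 1 < length w" "length w \<le> n - l + 1 + n"
  shows "w = w'"
proof -
  note split = blade_walk_split_at_hub[OF assms(1,3-5,7)]
  note split' = blade_walk_split_at_hub[OF assms(2,3-5), unfolded assms(6)[symmetric], OF assms(7)]
  have "take (n - l + 2) w = take (n - l + 2) w'"
    using blade_walk_unique[OF split(1) split'(1) assms(3-5)] assms(6,7) by simp
  moreover have "drop (n - l + 1) w = drop (n - l + 1) w'"
    using hub_walk_unique[OF split(2) split'(2) assms(3)] assms(6,8) by simp
  moreover note split(3) split'(3)
  ultimately show ?thesis by (metis (no_types))
qed

lemma shortest_walk_blade_to_hub:
  assumes "walk_from_to m n (blade_vertex n k l) 1 w" "length w = n - l + 2"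
    and "n \<ge> 3" "k \<in> {1..m}" "l \<in> {2..n}"
  shows "shortest_walk m n (blade_vertex n k l) 1 = w"
proof (rule shortest_walk_eqI[OF assms(1)])
  fix w' assume "walk_from_to m n (blade_vertex n k l) 1 w'"
  then show "length w \<le> length w'" using blade_to_hub_length_ge[OF _ assms(3-5)] assms(2) by simp
next
  fix w' assume "walk_from_to m n (blade_vertex n k l) 1 w'" "length w' = length w"
  then show "w' = w" using blade_walk_unique[OF _ assms(1,3-5)] assms(2) by simp
qed

lemma shortest_walk_hub_to_blade:
  assumes "walk_from_to m n 1 (blade_vertex n r l) w" "length w = l"
    and "n \<ge> 3" "r \<in> {1..m}" "l \<in> {2..n}"
  shows "shortest_walk m n 1 (blade_vertex n r l) = w"
proof (rule shortest_walk_eqI[OF assms(1)])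
  fix w' assume "walk_from_to m n 1 (blade_vertex n r l) w'"
  then show "length w \<le> length w'" using hub_to_blade_length_ge[OF _ assms(3-5)] assms(2) by simp
next
  fix w' assume "walk_from_to m n 1 (blade_vertex n r l) w'" "length w' = length w"
  then show "w' = w" using hub_walk_unique[OF _ assms(1,3)] assms(2,5) by simp
qed

lemma walk_length_eq_pred_mult_add:
  assumes "walk_from_to m n i j P" "length P = p * n"
  shows "length P = (p - 1) * n + n"
proof -
  have "P \<noteq> []" using assms(1) by (simp add: walk_from_to_def is_walk_def)
  then have "p * n \<noteq> 0" using assms(2) by (metis length_0_conv)
  then have "p \<noteq> 0" by auto
  then show ?thesis using assms(2) by (cases p) auto
qed

lemma case_a_if_from_hub:
  assumes "walk_from_to m n 1 j P" "n \<ge> 3" "length P = p * n"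
  shows "case_a m n p 1 j P"
proof -
  define R where "R = drop ((p - 1) * n) P"
  have len: "length P = (p - 1) * n + n" using walk_length_eq_pred_mult_add[OF assms(1,3)] .
  have "(p - 1) * n < length P" using len assms(2) by simp
  then obtain r where r: "\<forall>t\<in>{1..p - 1}. r t \<in> {1..m}" and P: "P = wcomp R (cycs n r (p - 1))"
    and R: "walk_from_to m n 1 j R"
    using hub_walk_decomp[OF assms(1,2)] unfolding R_def by blast
  have "length R = n" using len by (simp add: R_def)
  then have "1 < length R" "length R \<le> n" using assms(2) by simp_all
  then obtain k where k: "k \<in> {1..m}" "j = blade_vertex n k n"
    using hub_walk_eq_take_cyc[OF R assms(2)] \<open>length R = n\<close> by metis
  have "the_walk m n 1 j (n - 1) = R"
  proof (rule the_walk_eqI[OF R])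
    show "length R = Suc (n - 1)" using \<open>length R = n\<close> assms(2) by simp
    fix w assume "walk_from_to m n 1 j w" "length w = Suc (n - 1)"
    then show "w = R" using hub_walk_unique[OF _ R assms(2)] \<open>length R = n\<close> assms(2) by simp
  qed
  moreover have "j = (k - 1) * (n - 1) + n" using k(2) by (simp add: blade_vertex_def)
  ultimately show ?thesis
    unfolding case_a_def using k(1) r P by blast
qed

lemma blade_walk_decomp:
  assumes "walk_from_to m n (blade_vertex n k l) j P" "n \<ge> 3" "k \<in> {1..m}" "l \<in> {2..n}"
    and "length P = p * n"
  obtains A r T where "walk_from_to m n (blade_vertex n k l) 1 A" "length A = n - l + 2"
    and "\<forall>t\<in>{1..p - 1}. r t \<in> {1..m}"
    and "walk_from_to m n 1 j T" "length T = l - 1"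
    and "P = wcomp T (wcomp (cycs n r (p - 1)) A)"
proof -
  define A where "A = take (n - l + 2) P"
  define S where "S = drop (n - l + 1) P"
  define T where "T = drop ((p - 1) * n) S"
  have len: "length P = (p - 1) * n + n" using walk_length_eq_pred_mult_add[OF assms(1,5)] .
  have l: "2 \<le> l" "l \<le> n" using assms(4) by simp_all
  with len have "n - l + 1 < length P" by linarith
  note split = blade_walk_split_at_hub[OF assms(1-4) this, folded A_def S_def]
  have lenS: "length S = (p - 1) * n + (l - 1)" using len l unfolding S_def length_drop by linarith
  then have lt: "(p - 1) * n < length S" using l by linarith
  obtain r where r: "\<forall>t\<in>{1..p - 1}. r t \<in> {1..m}"
    and S: "S = wcomp T (cycs n r (p - 1))" and T: "walk_from_to m n 1 j T"
    by (rule hub_walk_decomp[OF split(2) assms(2) lt, folded T_def])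
  have "length A = n - l + 2" using \<open>n - l + 1 < length P\<close> by (simp add: A_def)
  moreover have "length T = l - 1" using lenS by (simp add: T_def)
  moreover have "cycs n r (p - 1) \<noteq> []" using length_cycs[OF assms(2), of r "p - 1"] by auto
  then have "P = wcomp T (wcomp (cycs n r (p - 1)) A)"
    using split(3) S by (simp add: wcomp_assoc)
  ultimately show thesis using that[OF split(1) _ r T] by simp
qed

lemma case_b_if_from_blade_start:
  assumes "walk_from_to m n (blade_vertex n k 2) j P" "n \<ge> 3" "k \<in> {1..m}" "length P = p * n"
  shows "case_b m n p (blade_vertex n k 2) j P"
proof -
  have "2 \<in> {2..n}" using assms(2) by simp
  obtain A r T where A: "walk_from_to m n (blade_vertex n k 2) 1 A" "length A = n - 2 + 2"
    and r: "\<forall>t\<in>{1..p - 1}. r t \<in> {1..m}"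
    and T: "walk_from_to m n 1 j T" "length T = 2 - 1"
    and P: "P = wcomp T (wcomp (cycs n r (p - 1)) A)"
    by (rule blade_walk_decomp[OF assms(1-3) \<open>2 \<in> {2..n}\<close> assms(4)])
  have "length A = n" using A(2) assms(2) by simp
  have "T = [1]" and "j = 1"
    using T by (auto simp: walk_from_to_def length_Suc_conv)
  then have "P = wcomp (cycs n r (p - 1)) A" using P by (simp add: wcomp_def)
  moreover have "the_walk m n (blade_vertex n k 2) 1 (n - 1) = A"
  proof (rule the_walk_eqI[OF A(1)])
    show "length A = Suc (n - 1)" using \<open>length A = n\<close> assms(2) by simp
    fix w assume "walk_from_to m n (blade_vertex n k 2) 1 w" "length w = Suc (n - 1)"
    then show "w = A" using blade_walk_unique[OF _ A(1) assms(2,3)] \<open>length A = n\<close> assms(2) by simp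
  qed
  moreover have "blade_vertex n k 2 = (k - 1) * (n - 1) + 2" by (simp add: blade_vertex_def)
  ultimately show ?thesis
    unfolding case_b_def using \<open>j = 1\<close> assms(3) r by blast
qed

lemma case_c_if_from_blade_interior:
  assumes "walk_from_to m n (blade_vertex n k l) j P" "n \<ge> 3" "k \<in> {1..m}" "l \<in> {3..n}"
    and "length P = p * n"
  shows "case_c m n p (blade_vertex n k l) j P"
proof -
  have l: "l \<in> {2..n}" and l': "l - 1 \<in> {2..n}" using assms(4) by auto
  obtain A r T where A: "walk_from_to m n (blade_vertex n k l) 1 A" "length A = n - l + 2"
    and r: "\<forall>t\<in>{1..p - 1}. r t \<in> {1..m}"
    and T: "walk_from_to m n 1 j T" "length T = l - 1"
    and P: "P = wcomp T (wcomp (cycs n r (p - 1)) A)"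
    by (rule blade_walk_decomp[OF assms(1-3) l assms(5)])
  have "1 < length T" "length T \<le> n" using T(2) assms(4) by auto
  then obtain r' where r': "r' \<in> {1..m}" "j = blade_vertex n r' (l - 1)"
    using hub_walk_eq_take_cyc[OF T(1) assms(2)] T(2) by metis
  have shA: "shortest_walk m n (blade_vertex n k l) 1 = A"
    by (rule shortest_walk_blade_to_hub[OF A assms(2,3) l])
  have shT: "shortest_walk m n 1 j = T"
    using shortest_walk_hub_to_blade[OF T(1)[unfolded r'(2)] T(2) assms(2) r'(1) l'] r'(2) by simp
  have W: "walk_from_to m n (blade_vertex n k l) j (wcomp T A)"
    by (rule walk_from_to_wcomp[OF A(1) T(1)])
  have "T \<noteq> []" using \<open>1 < length T\<close> by auto
  then have "length (wcomp T A) = n"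
    using length_wcomp[of T A] A(2) T(2) \<open>1 < length T\<close> assms(4) by auto
  have "n - l + 1 < n" using assms(4) by auto
  have uniq: "w = wcomp T A" if "walk_from_to m n (blade_vertex n k l) j w" "length w = n" for w
    using blade_hub_walk_unique[OF that(1) W assms(2,3) l] that(2) \<open>length (wcomp T A) = n\<close>
      \<open>n - l + 1 < n\<close> by simp
  have "the_walk m n (blade_vertex n k l) j (n - 1) = wcomp T A"
  proof (rule the_walk_eqI[OF W])
    show "length (wcomp T A) = Suc (n - 1)" using \<open>length (wcomp T A) = n\<close> assms(2) by simp
    fix w assume "walk_from_to m n (blade_vertex n k l) j w" "length w = Suc (n - 1)"
    then show "w = wcomp T A" using uniq assms(2) by simp
  qed
  moreover have "\<exists>!w. walk_from_to m n (blade_vertex n k l) j w \<and> length w = n"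
  proof (rule ex1I[of _ "wcomp T A"])
    show "walk_from_to m n (blade_vertex n k l) j (wcomp T A) \<and> length (wcomp T A) = n"
      using W \<open>length (wcomp T A) = n\<close> by simp
  qed (use uniq in blast)
  moreover have "\<exists>k'\<in>{1..m}. \<exists>r\<in>{1..m}. \<exists>l'\<in>{3..n}.
      blade_vertex n k l = (k' - 1) * (n - 1) + l' \<and> j = (r - 1) * (n - 1) + (l' - 1)"
  proof -
    have "blade_vertex n k l = (k - 1) * (n - 1) + l \<and> j = (r' - 1) * (n - 1) + (l - 1)"
      using r'(2) by (simp add: blade_vertex_def)
    then show ?thesis using assms(3,4) r'(1) by blast
  qed
  moreover have "\<exists>rs. (\<forall>t\<in>{1..p - 1}. rs t \<in> {1..m}) \<and>
      P = wcomp (shortest_walk m n 1 j)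
            (wcomp (cycs n rs (p - 1)) (shortest_walk m n (blade_vertex n k l) 1))"
    using r unfolding P shA shT by blast
  ultimately show ?thesis
    unfolding case_c_def using shA shT by simp
qed

theorem lemma2p5:
  fixes m n p i j :: nat and P :: "nat list"
  assumes "m \<ge> 1" and "n \<ge> 3" and "p \<ge> 2"
    and "i \<in> dw_V m n" and "j \<in> dw_V m n"
    and "walk_from_to m n i j P" and "length P - 1 = p*n - 1"
  shows "(case_a m n p i j P \<and> \<not> case_b m n p i j P \<and> \<not> case_c m n p i j P) \<or>
         (\<not> case_a m n p i j P \<and> case_b m n p i j P \<and> \<not> case_c m n p i j P) \<or>
         (\<not> case_a m n p i j P \<and> \<not> case_b m n p i j P \<and> case_c m n p i j P)"
proof -
  have "P \<noteq> []" using assms(6) by (simp add: walk_from_to_def is_walk_def)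
  moreover have "p * n \<noteq> 0" using assms(2,3) by simp
  ultimately have len: "length P = p * n" using assms(7) by (cases P) auto
  have "case_a m n p i j P \<or> case_b m n p i j P \<or> case_c m n p i j P"
  proof (cases "i = 1")
    case True
    then show ?thesis using case_a_if_from_hub assms(2,6) len by blast
  next
    case False
    then obtain k l where kl: "k \<in> {1..m}" "l \<in> {2..n}" "i = blade_vertex n k l"
      using dw_V_cases[OF assms(4,2)] by metis
    show ?thesis
    proof (cases "l = 2")
      case True
      then show ?thesis using case_b_if_from_blade_start[of m n k j P p] assms(2,6) kl len by simp
    next
      case False
      then have "l \<in> {3..n}" using kl(2) by auto
      then show ?thesis using case_c_if_from_blade_interior[of m n k l j P p] assms(2,6) kl len by simp
    qed
  qed
  moreover have "case_a m n p i j P \<Longrightarrow> i = 1" by (simp add: case_a_def)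
  moreover have "case_b m n p i j P \<Longrightarrow> i \<noteq> 1 \<and> j = 1" by (auto simp: case_b_def)
  moreover have "case_c m n p i j P \<Longrightarrow> i \<noteq> 1 \<and> j \<noteq> 1" by (auto simp: case_c_def)
  ultimately show ?thesis by blast
qed

end
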